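(* Let $s\ge1$ and $k\ge0$ be integers with $2s>k$. Then: (a) for all partitions $\lambda,\mu$ with $|\lambda|+|\mu|\le k$, the set $\Lambda^s_{\lambda,\mu}$ is (the diagram of) a partition with $|\Lambda^s_{\lambda,\mu}|=s(2s+1)+2|\lambda|+2|\mu|$ and $\mathrm{cweight}(\Lambda^s_{\lambda,\mu})=s$; (b) the map $(\lambda,\mu)\mapsto\Lambda^s_{\lambda,\mu}$ is a bijection from the set of pairs of partitions with $|\lambda|+|\mu|\le k$ onto the set of partitions $\nu$ with $\mathrm{cweight}(\nu)=s$ and $|\nu|\le s(2s+1)+2k$.
   Context: A partition $\nu=(\nu_1\ge\nu_2\ge\cdots)$ is identified with its diagram $\{(x,y)\in\mathbb Z^2:1\le x\le\ell(\nu),\,1\le y\le\nu_x\}$ (row index $x$, column index $y$); $|\nu|$ is the number of boxes and $\ell(\nu)$ the number of nonzero parts. The box $(x,y)$ has color $x-y\bmod 2\in\mathbb Z/2\mathbb Z$. The cweight of $\nu$ is $\mathrm{cweight}(\nu)=\#\{\text{boxes of color }1\}-\#\{\text{boxes of color }0\}$. For $s\ge1$ let $\Lambda^s=(2s,2s-1,\dots,2,1)$ (so $|\Lambda^s|=s(2s+1)$). For partitions $\lambda,\mu$ let $\Lambda^s_{\lambda,\mu}=\Lambda^s\cup\{(x,\,2s-x+1+t):1\le x\le\ell(\lambda),\,1\le t\le2\lambda_x\}\cup\{(2s-y+1+t,\,y):1\le y\le\ell(\mu),\,1\le t\le 2\mu_y\}$, i.e. $\Lambda^s$ with row $x$ lengthened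 by $2\lambda_x$ boxes and column $y$ lengthened by $2\mu_y$ boxes. *)

theory Defs
  imports Main
begin

text \<open>A partition is a weakly decreasing list of positive integers
  (parts nu_1 >= nu_2 >= ...; nu_x is the entry at index x-1).\<close>
definition is_partition :: "nat list \<Rightarrow> bool" where
  "is_partition p \<longleftrightarrow> sorted (rev p) \<and> 0 \<notin> set p"

definition psize :: "nat list \<Rightarrow> nat" where
  "psize p = sum_list p"

definition diagram :: "nat list \<Rightarrow> (int \<times> int) set" where
  "diagram p = {(x, y). 1 \<le> x \<and> x \<le> int (length p) \<and> 1 \<le> y \<and> y \<le> int (p ! nat (x - 1))}"

definition cweight :: "(int \<times> int) set \<Rightarrow> int" where
  "cweight D = int (card {b \<in> D. (fst b - snd b) mod 2 = 1})
              - int (card {b \<in> D. (fst b - snd b) mod 2 = 0})"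

definition staircase :: "nat \<Rightarrow> nat list" where
  "staircase s = rev [1..<2 * s + 1]"

definition Lam :: "nat \<Rightarrow> nat list \<Rightarrow> nat list \<Rightarrow> (int \<times> int) set" where
  "Lam s la mu = diagram (staircase s)
     \<union> {(x, 2 * int s - x + 1 + t) | x t. 1 \<le> x \<and> x \<le> int (length la)
           \<and> 1 \<le> t \<and> t \<le> 2 * int (la ! nat (x - 1))}
     \<union> {(2 * int s - y + 1 + t, y) | y t. 1 \<le> y \<and> y \<le> int (length mu)
           \<and> 1 \<le> t \<and> t \<le> 2 * int (mu ! nat (y - 1))}"

end

theory Submission
  imports Defs
begin

(* Proof of Lemma 4.1.  The key observation is the closed description
     Lam s la mu = {(a,b). a,b >= 1  and  a + b <= 2s + 1 + 2 max(la_a, mu_b)},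
   where la_a denotes the a-th part of la (0 beyond its length); it holds once
   la and mu have at most 2s parts.  By induction on
      |la| + |mu| this yields size s(2s+1) + 2|la| + 2|mu| and cweight s,
      starting from the staircase Lambda^s itself.
   3. The closed form determines la and mu (injectivity), since 2s > k keeps
      the arms of la and the legs of mu apart.
   4. A Young set without a removable domino is a staircase, and the only
      staircase of cweight s is Lambda^s.  Removing a domino from a partition
      of cweight s and size at most s(2s+1) + 2k and re-adding it as a box of
      la or mu shows, by induction on the size, that every such partition is
      of the form Lam s la mu (surjectivity). *)

definition part_at :: "nat list \<Rightarrow> int \<Rightarrow> int" where
  "part_at p a = (if 1 \<le> a \<and> a \<le> int (length p) then int (p ! nat (a - 1)) else 0)"

lemma is_partition_iff_nth:
  "is_partition p \<longleftrightarrow>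
     (\<forall>i j. i \<le> j \<longrightarrow> j < length p \<longrightarrow> p ! j \<le> p ! i) \<and> (\<forall>i < length p. 1 \<le> p ! i)"
  unfolding is_partition_def sorted_rev_iff_nth_mono by (auto simp: in_set_conv_nth)

lemma partition_nth_pos: "is_partition p \<Longrightarrow> i < length p \<Longrightarrow> 1 \<le> p ! i"
  unfolding is_partition_iff_nth by blast

lemma partition_nth_mono: "is_partition p \<Longrightarrow> i \<le> j \<Longrightarrow> j < length p \<Longrightarrow> p ! j \<le> p ! i"
  unfolding is_partition_iff_nth by blast

lemma is_partition_Nil: "is_partition []"
  unfolding is_partition_def by simp

lemma psize_Nil: "psize [] = 0"
  unfolding psize_def by simp

text \<open>Every part is at least 1, so a partition has at most as many parts as boxes.\<close>
lemma length_le_psize: "is_partition p \<Longrightarrow> length p \<le> psize p"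
proof -
  have "0 \<notin> set p \<Longrightarrow> length p \<le> sum_list p" for p :: "nat list"
    by (induct p) auto
  then show "is_partition p \<Longrightarrow> length p \<le> psize p"
    unfolding is_partition_def psize_def by blast
qed

lemma part_at_nonneg: "0 \<le> part_at p a"
  unfolding part_at_def by auto

lemma part_at_le_psize: "part_at p a \<le> int (psize p)"
  unfolding part_at_def psize_def using elem_le_sum_list[of "nat (a - 1)" p]
  by (auto simp: nat_less_iff)

lemma part_at_pos_iff: "is_partition p \<Longrightarrow> 0 < part_at p a \<longleftrightarrow> 1 \<le> a \<and> a \<le> int (length p)"
  unfolding part_at_def using partition_nth_pos[of p "nat (a - 1)"] by (auto simp: nat_less_iff)

lemma part_at_antimono: "is_partition p \<Longrightarrow> 1 \<le> a \<Longrightarrow> a \<le> a' \<Longrightarrow> part_at p a' \<le> part_at p a"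
  unfolding part_at_def using partition_nth_mono[of p "nat (a - 1)" "nat (a' - 1)"] by auto

text \<open>The rows of la carrying a part and the columns of mu carrying a part lie in
  the triangle a + b \<le> |la| + |mu|; this is what keeps the arms and legs of
  Lam s la mu apart when |la| + |mu| < 2s.\<close>
lemma arm_leg_separated:
  "is_partition la \<Longrightarrow> is_partition mu \<Longrightarrow> 0 < part_at la a \<Longrightarrow> 0 < part_at mu b
   \<Longrightarrow> a + b \<le> int (psize la + psize mu)"
  using part_at_pos_iff[of la a] part_at_pos_iff[of mu b] length_le_psize[of la]
    length_le_psize[of mu] by auto

section \<open>Young sets: finite down-closed sets of boxes\<close>

definition young_set :: "(int \<times> int) set \<Rightarrow> bool" where
  "young_set D \<longleftrightarrow> finite D \<and> (\<forall>a b. (a,b) \<in> D \<longrightarrow> 1 \<le> a \<and> 1 \<le> b)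
     \<and> (\<forall>a b a' b'. (a,b) \<in> D \<and> 1 \<le> a' \<and> a' \<le> a \<and> 1 \<le> b' \<and> b' \<le> b \<longrightarrow> (a',b') \<in> D)"

lemma young_setI:
  assumes "finite D" "\<And>a b. (a,b) \<in> D \<Longrightarrow> 1 \<le> a \<and> 1 \<le> b"
    "\<And>a b a' b'. (a,b) \<in> D \<Longrightarrow> 1 \<le> a' \<Longrightarrow> a' \<le> a \<Longrightarrow> 1 \<le> b' \<Longrightarrow> b' \<le> b \<Longrightarrow> (a',b') \<in> D"
  shows "young_set D"
  using assms unfolding young_set_def by blast

lemma young_setD:
  assumes "young_set D"
  shows "finite D" "\<And>a b. (a,b) \<in> D \<Longrightarrow> 1 \<le> a" "\<And>a b. (a,b) \<in> D \<Longrightarrow> 1 \<le> b"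
    "\<And>a b a' b'. (a,b) \<in> D \<Longrightarrow> 1 \<le> a' \<Longrightarrow> a' \<le> a \<Longrightarrow> 1 \<le> b' \<Longrightarrow> b' \<le> b \<Longrightarrow> (a',b') \<in> D"
  using assms unfolding young_set_def by blast+

lemma diagram_Sigma: "diagram nu = Sigma {1..int (length nu)} (\<lambda>x. {1..int (nu ! nat (x - 1))})"
  unfolding diagram_def by auto

lemma card_diagram: "card (diagram nu) = psize nu"
proof -
  have "card (diagram nu) = (\<Sum>x\<in>{1..int (length nu)}. nu ! nat (x - 1))"
    unfolding diagram_Sigma by (subst card_SigmaI) simp_all
  also have "\<dots> = (\<Sum>i<length nu. nu ! i)"
    by (rule sum.reindex_bij_witness[of _ "\<lambda>i. int i + 1" "\<lambda>x. nat (x - 1)"])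
      (auto simp: nat_less_iff)
  also have "\<dots> = psize nu"
    unfolding psize_def by (simp add: sum_list_sum_nth atLeast0LessThan)
  finally show ?thesis .
qed

lemma young_set_diagram:
  assumes nu: "is_partition nu"
  shows "young_set (diagram nu)"
proof (rule young_setI)
  show "finite (diagram nu)"
    unfolding diagram_Sigma by simp
next
  fix a b assume "(a, b) \<in> diagram nu"
  then show "1 \<le> a \<and> 1 \<le> b" unfolding diagram_def by simp
next
  fix a b a' b' assume ab: "(a, b) \<in> diagram nu" "1 \<le> a'" "a' \<le> a" "1 \<le> b'" "b' \<le> b"
  then have "nu ! nat (a - 1) \<le> nu ! nat (a' - 1)"
    using partition_nth_mono[OF nu, of "nat (a' - 1)" "nat (a - 1)"]
    unfolding diagram_def by (simp add: nat_less_iff)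
  then show "(a', b') \<in> diagram nu" using ab unfolding diagram_def by simp
qed

lemma downclosed_eq_interval:
  assumes fin: "finite S" and pos: "\<forall>y\<in>S. 1 \<le> y"
    and dc: "\<forall>y y'. y \<in> S \<and> 1 \<le> y' \<and> y' \<le> y \<longrightarrow> y' \<in> S"
  shows "S = {1..int (card S)}"
proof (cases "S = {}")
  case False
  define m where "m = Max S"
  have "m \<in> S" using fin False unfolding m_def by simp
  then have Sm: "S = {1..m}"
    using Max_ge[OF fin] pos dc unfolding m_def by fastforce
  moreover from \<open>m \<in> S\<close> pos have "1 \<le> m" by simp
  ultimately have "int (card S) = m" by simp
  with Sm show ?thesis by simp
qed simp

definition row :: "(int \<times> int) set \<Rightarrow> int \<Rightarrow> int set" where
  "row D x = {y. (x, y) \<in> D}"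

definition row_lengths :: "(int \<times> int) set \<Rightarrow> nat \<Rightarrow> nat list" where
  "row_lengths D n = map (\<lambda>i. card (row D (int i))) [1..<n+1]"

lemma young_set_row_interval:
  assumes Y: "young_set D" and x: "1 \<le> x"
  shows "row D x = {1..int (card (row D x))}"
proof (rule downclosed_eq_interval)
  show "finite (row D x)" unfolding row_def
    by (rule finite_subset[of _ "snd ` D"]) (force, simp add: young_setD(1)[OF Y])
  show "\<forall>y\<in>row D x. 1 \<le> y" using young_setD(3)[OF Y] unfolding row_def by blast
  show "\<forall>y y'. y \<in> row D x \<and> 1 \<le> y' \<and> y' \<le> y \<longrightarrow> y' \<in> row D x"
    using young_setD(4)[OF Y] x unfolding row_def by blast
qed

lemma young_set_rows_decreasing:
  assumes Y: "young_set D" and "1 \<le> x" "x \<le> x'"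
  shows "card (row D x') \<le> card (row D x)"
proof (rule card_mono)
  show "finite (row D x)" unfolding row_def
    by (rule finite_subset[of _ "snd ` D"]) (force, simp add: young_setD(1)[OF Y])
  show "row D x' \<subseteq> row D x"
    using young_setD(3,4)[OF Y] assms(2,3) unfolding row_def by blast
qed

lemma length_row_lengths [simp]: "length (row_lengths D n) = n"
  unfolding row_lengths_def by simp

lemma nth_row_lengths:
  "1 \<le> x \<Longrightarrow> x \<le> int n \<Longrightarrow> row_lengths D n ! nat (x - 1) = card (row D x)"
  unfolding row_lengths_def by (simp add: nth_map_upt nat_less_iff del: upt_Suc)

lemma is_partition_row_lengths:
  assumes Y: "young_set D" and ne: "\<And>x. 1 \<le> x \<Longrightarrow> x \<le> int n \<Longrightarrow> row D x \<noteq> {}"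
  shows "is_partition (row_lengths D n)"
  unfolding is_partition_iff_nth
proof (intro conjI allI impI)
  fix i j assume "i \<le> j" "j < length (row_lengths D n)"
  then show "row_lengths D n ! j \<le> row_lengths D n ! i"
    using young_set_rows_decreasing[OF Y, of "int i + 1" "int j + 1"]
      nth_row_lengths[of "int i + 1" n D] nth_row_lengths[of "int j + 1" n D]
    by simp
next
  fix i assume i: "i < length (row_lengths D n)"
  have "row D (int i + 1) = {1..int (card (row D (int i + 1)))}"
    by (rule young_set_row_interval[OF Y]) simp
  moreover have "row D (int i + 1) \<noteq> {}" using ne[of "int i + 1"] i by simp
  ultimately have "card (row D (int i + 1)) \<noteq> 0" by auto
  then show "1 \<le> row_lengths D n ! i"
    using nth_row_lengths[of "int i + 1" n D] i by simp
qed

lemma young_set_is_diagram: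
  assumes Y: "young_set D"
  shows "\<exists>nu. is_partition nu \<and> D = diagram nu"
proof -
  note pos = young_setD(2,3)[OF Y] and dc = young_setD(4)[OF Y]
  define n where "n = card {x. (x, 1) \<in> D}"
  have col1: "{x. (x, 1) \<in> D} = {1..int n}"
    unfolding n_def
  proof (rule downclosed_eq_interval)
    show "finite {x. (x, 1) \<in> D}"
      by (rule finite_subset[of _ "fst ` D"]) (force, simp add: young_setD(1)[OF Y])
    show "\<forall>x\<in>{x. (x, 1) \<in> D}. 1 \<le> x" using pos by blast
    show "\<forall>x x'. x \<in> {x. (x, 1) \<in> D} \<and> 1 \<le> x' \<and> x' \<le> x \<longrightarrow> x' \<in> {x. (x, 1) \<in> D}"
      using dc by blast
  qed
  define nu where "nu = row_lengths D n"
  have "row D x \<noteq> {}" if "1 \<le> x" "x \<le> int n" for x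
    using col1 that unfolding row_def by auto
  then have part: "is_partition nu" unfolding nu_def by (rule is_partition_row_lengths[OF Y])
  have "(x, y) \<in> D \<longleftrightarrow> (x, y) \<in> diagram nu" for x y
  proof
    assume xy: "(x, y) \<in> D"
    then have "1 \<le> x" "1 \<le> y" using pos by auto
    with xy have "x \<le> int n" using col1 dc[OF xy, of x 1] by auto
    then show "(x, y) \<in> diagram nu"
      using xy \<open>1 \<le> x\<close> young_set_row_interval[OF Y \<open>1 \<le> x\<close>] nth_row_lengths[OF \<open>1 \<le> x\<close>]
      unfolding diagram_def nu_def row_def by auto
  next
    assume "(x, y) \<in> diagram nu"
    then show "(x, y) \<in> D"
      using young_set_row_interval[OF Y, of x] nth_row_lengths[of x n D]
      unfolding diagram_def nu_def row_def by auto
  qed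
  with part show ?thesis by auto
qed

definition box_sign :: "int \<times> int \<Rightarrow> int" where
  "box_sign b = (if (fst b - snd b) mod 2 = 1 then 1 else -1)"

lemma cweight_Un:
  assumes "finite A" "finite B" "A \<inter> B = {}"
  shows "cweight (A \<union> B) = cweight A + cweight B"
proof -
  have "card {b \<in> A \<union> B. P b} = card {b \<in> A. P b} + card {b \<in> B. P b}" for P
  proof -
    have "{b \<in> A \<union> B. P b} = {b \<in> A. P b} \<union> {b \<in> B. P b}" by blast
    moreover have "{b \<in> A. P b} \<inter> {b \<in> B. P b} = {}" using assms(3) by blast
    ultimately show ?thesis using assms(1,2) by (simp add: card_Un_disjoint)
  qed
  then show ?thesis unfolding cweight_def by simp
qed

lemma cweight_singleton: "cweight {b} = box_sign b"
proof (cases "(fst b - snd b) mod 2 = 1")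
  case True
  then have "{c \<in> {b}. (fst c - snd c) mod 2 = 1} = {b}" "{c \<in> {b}. (fst c - snd c) mod 2 = 0} = {}"
    by auto
  with True show ?thesis unfolding cweight_def box_sign_def by simp
next
  case False
  then have "(fst b - snd b) mod 2 = 0" by presburger
  then have "{c \<in> {b}. (fst c - snd c) mod 2 = 1} = {}" "{c \<in> {b}. (fst c - snd c) mod 2 = 0} = {b}"
    by auto
  with False show ?thesis unfolding cweight_def box_sign_def by simp
qed

text \<open>A domino (two adjacent boxes) has one box of each color, hence weight 0.\<close>
lemma cweight_two_boxes:
  assumes "(fst b - snd b) mod 2 \<noteq> (fst c - snd c) mod 2"
  shows "cweight {b, c} = 0"
proof -
  have "b \<noteq> c" using assms by auto
  moreover have "{b, c} = {b} \<union> {c}" by auto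
  ultimately have "cweight {b, c} = box_sign b + box_sign c"
    using cweight_Un[of "{b}" "{c}"] cweight_singleton by simp
  also have "\<dots> = 0"
  proof -
    have "(fst b - snd b) mod 2 = 1 \<longleftrightarrow> (fst c - snd c) mod 2 \<noteq> 1" using assms by presburger
    then show ?thesis unfolding box_sign_def by auto
  qed
  finally show ?thesis .
qed

lemma cweight_hdomino: "cweight {(x, y), (x, y + 1)} = 0"
  by (rule cweight_two_boxes) (simp; presburger)

lemma cweight_vdomino: "cweight {(x, y), (x + 1, y)} = 0"
  by (rule cweight_two_boxes) (simp; presburger)

lemma add_hdomino:
  assumes "finite D" "(x, y) \<notin> D" "(x, y + 1) \<notin> D"
  shows "card (D \<union> {(x, y), (x, y + 1)}) = card D + 2"
    and "cweight (D \<union> {(x, y), (x, y + 1)}) = cweight D"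
  using assms cweight_Un[of D "{(x, y), (x, y + 1)}"] cweight_hdomino by (simp_all add: card_insert_if)

text \<open>Reflection in the main diagonal; it exchanges the roles of la and mu.\<close>
definition transp :: "(int \<times> int) set \<Rightarrow> (int \<times> int) set" where
  "transp D = prod.swap ` D"

lemma transp_mem [simp]: "(a, b) \<in> transp D \<longleftrightarrow> (b, a) \<in> D"
  unfolding transp_def by force

lemma transp_transp [simp]: "transp (transp D) = D"
  unfolding transp_def by (simp add: image_image)

lemma transp_Un: "transp (A \<union> B) = transp A \<union> transp B"
  unfolding transp_def by auto

lemma transp_Diff: "transp (A - B) = transp A - transp B"
  unfolding transp_def by auto

lemma transp_pair: "transp {(a, b), (c, d)} = {(b, a), (d, c)}"
  unfolding transp_def by simp

lemma card_transp: "card (transp D) = card D"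
  unfolding transp_def by (rule card_image) (metis inj_on_def swap_swap)

lemma young_set_transp:
  assumes Y: "young_set D"
  shows "young_set (transp D)"
proof (rule young_setI)
  show "finite (transp D)" using young_setD(1)[OF Y] unfolding transp_def by simp
next
  fix a b assume "(a, b) \<in> transp D"
  then show "1 \<le> a \<and> 1 \<le> b" using young_setD(2,3)[OF Y] by simp
next
  fix a b a' b' assume "(a, b) \<in> transp D" "1 \<le> a'" "a' \<le> a" "1 \<le> b'" "b' \<le> b"
  then show "(a', b') \<in> transp D" using young_setD(4)[OF Y, of b a b' a'] by simp
qed

text \<open>The color x - y mod 2 is symmetric, so transposition preserves cweight.\<close>
lemma cweight_transp: "cweight (transp D) = cweight D"
proof -
  have sym: "(snd b - fst b) mod 2 = (fst b - snd b) mod 2" for b :: "int \<times> int" by presburger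
  have "{b \<in> transp D. (fst b - snd b) mod 2 = c} = transp {b \<in> D. (fst b - snd b) mod 2 = c}" for c
    unfolding transp_def using sym by force
  then show ?thesis unfolding cweight_def using card_transp by simp
qed

definition stair :: "nat \<Rightarrow> (int \<times> int) set" where
  "stair m = {(a, b). 1 \<le> a \<and> 1 \<le> b \<and> a + b \<le> int m + 1}"

lemma finite_stair: "finite (stair m)"
  by (rule finite_subset[of _ "{1..int m} \<times> {1..int m}"]) (auto simp: stair_def)

lemma diagram_staircase: "diagram (staircase s) = stair (2 * s)"
proof -
  have len: "length (staircase s) = 2 * s" by (simp add: staircase_def)
  have nth: "i < 2 * s \<Longrightarrow> staircase s ! i = 2 * s - i" for i
    unfolding staircase_def by (simp add: rev_nth del: upt_Suc)
  show ?thesis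
    unfolding diagram_def stair_def len using nth by (auto simp: nat_less_iff)
qed

text \<open>The staircase of size m has m(m+1)/2 boxes; its cweight is m/2 for even m
  and -(m+1)/2 for odd m (the new antidiagonal has m+1 boxes of one color).\<close>
lemma stair_card_cweight:
  "2 * card (stair m) = m * (m + 1) \<and>
   cweight (stair m) = (if even m then int m div 2 else - ((int m + 1) div 2))"
proof (induct m)
  case 0
  have "stair 0 = {}" unfolding stair_def by auto
  then show ?case by (simp add: cweight_def)
next
  case (Suc m)
  define A where "A = (\<lambda>a. (a, int m + 2 - a)) ` {1..int m + 1}"
  have inj: "inj_on (\<lambda>a. (a, int m + 2 - a)) {1..int m + 1}" by (rule inj_onI) simp
  have cA: "card A = m + 1" unfolding A_def using card_image[OF inj] by simp
  have finA: "finite A" unfolding A_def by simp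
  have split: "stair (Suc m) = stair m \<union> A" and dis: "stair m \<inter> A = {}"
    unfolding stair_def A_def by auto
  have cardS: "card (stair (Suc m)) = card (stair m) + (m + 1)"
    unfolding split using card_Un_disjoint[OF finite_stair finA dis] cA by simp
  have colA: "\<forall>b\<in>A. (fst b - snd b) mod 2 = int m mod 2"
    unfolding A_def by auto presburger
  have cwA: "cweight A = (if odd m then int m + 1 else - (int m + 1))"
  proof (cases "odd m")
    case True
    then have "int m mod 2 = 1" by presburger
    then have e1: "{b \<in> A. (fst b - snd b) mod 2 = 1} = A" and e2: "{b \<in> A. (fst b - snd b) mod 2 = 0} = {}"
      using colA by auto
    show ?thesis unfolding cweight_def e1 e2 using True cA by simp
  next
    case False
    then have "int m mod 2 = 0" by presburger
    then have e1: "{b \<in> A. (fst b - snd b) mod 2 = 1} = {}" and e2: "{b \<in> A. (fst b - snd b) mod 2 = 0} = A"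
      using colA by auto
    show ?thesis unfolding cweight_def e1 e2 using False cA by simp
  qed
  have "cweight (stair (Suc m)) = cweight (stair m) + cweight A"
    unfolding split by (rule cweight_Un[OF finite_stair finA dis])
  then show ?case using Suc cardS cwA by (auto simp: algebra_simps)
qed

section \<open>The closed form of Lam\<close>

definition lam_set :: "nat \<Rightarrow> nat list \<Rightarrow> nat list \<Rightarrow> (int \<times> int) set" where
  "lam_set s la mu =
     {(a, b). 1 \<le> a \<and> 1 \<le> b \<and> a + b \<le> 2 * int s + 1 + 2 * max (part_at la a) (part_at mu b)}"

text \<open>Every box of Lam s la mu satisfies the closed description: an arm box in row x
  lies at most 2 la_x beyond the staircase (symmetrically for the legs).  The
  length bounds keep the arm and leg boxes in the positive quadrant.\<close>
lemma Lam_subset_lam_set: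
  assumes len: "length la \<le> 2 * s" "length mu \<le> 2 * s"
  shows "Lam s la mu \<subseteq> lam_set s la mu"
proof
  fix p assume "p \<in> Lam s la mu"
  then consider (stair) "p \<in> stair (2 * s)"
    | (arm) x t where "p = (x, 2 * int s - x + 1 + t)" "1 \<le> x" "x \<le> int (length la)"
           "1 \<le> t" "t \<le> 2 * int (la ! nat (x - 1))"
    | (leg) y t where "p = (2 * int s - y + 1 + t, y)" "1 \<le> y" "y \<le> int (length mu)"
           "1 \<le> t" "t \<le> 2 * int (mu ! nat (y - 1))"
    unfolding Lam_def diagram_staircase by blast
  then show "p \<in> lam_set s la mu"
  proof cases
    case stair
    then obtain a b where "p = (a, b)" "1 \<le> a" "1 \<le> b" "a + b \<le> 2 * int s + 1"
      unfolding stair_def by auto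
    moreover have "0 \<le> max (part_at la a) (part_at mu b)"
      using part_at_nonneg[of la a] by simp
    ultimately show ?thesis unfolding lam_set_def by simp
  next
    case arm
    then have "part_at la x = int (la ! nat (x - 1))" unfolding part_at_def by auto
    then show ?thesis using arm len part_at_nonneg[of mu] unfolding lam_set_def by auto
  next
    case leg
    then have "part_at mu y = int (mu ! nat (y - 1))" unfolding part_at_def by auto
    then show ?thesis using leg len part_at_nonneg[of la] unfolding lam_set_def by auto
  qed
qed

text \<open>Conversely a box of the closed form beyond the staircase lies on the arm of
  its row or on the leg of its column, whichever of la_a, mu_b is larger.\<close>
lemma lam_set_subset_Lam:
  assumes la: "is_partition la" and mu: "is_partition mu"
  shows "lam_set s la mu \<subseteq> Lam s la mu"
proof
  fix p assume "p \<in> lam_set s la mu"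
  then obtain a b where p: "p = (a, b)" "1 \<le> a" "1 \<le> b"
    "a + b \<le> 2 * int s + 1 + 2 * max (part_at la a) (part_at mu b)"
    unfolding lam_set_def by auto
  consider (stair) "a + b \<le> 2 * int s + 1"
    | (arm) "a + b > 2 * int s + 1" "part_at mu b \<le> part_at la a"
    | (leg) "a + b > 2 * int s + 1" "part_at la a < part_at mu b"
    by linarith
  then show "p \<in> Lam s la mu"
  proof cases
    case stair
    then show ?thesis using p unfolding Lam_def diagram_staircase stair_def by auto
  next
    case arm
    with p have "0 < part_at la a" by auto
    with part_at_pos_iff[OF la] have a: "a \<le> int (length la)" by auto
    with p have "part_at la a = int (la ! nat (a - 1))" unfolding part_at_def by auto
    then have "\<exists>x t. p = (x, 2 * int s - x + 1 + t) \<and> 1 \<le> x \<and> x \<le> int (length la)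
         \<and> 1 \<le> t \<and> t \<le> 2 * int (la ! nat (x - 1))"
      using p a arm by (intro exI[of _ a] exI[of _ "a + b - 2 * int s - 1"]) auto
    then show ?thesis unfolding Lam_def by blast
  next
    case leg
    with p have "0 < part_at mu b" by auto
    with part_at_pos_iff[OF mu] have b: "b \<le> int (length mu)" by auto
    with p have "part_at mu b = int (mu ! nat (b - 1))" unfolding part_at_def by auto
    then have "\<exists>y t. p = (2 * int s - y + 1 + t, y) \<and> 1 \<le> y \<and> y \<le> int (length mu)
         \<and> 1 \<le> t \<and> t \<le> 2 * int (mu ! nat (y - 1))"
      using p b leg by (intro exI[of _ b] exI[of _ "a + b - 2 * int s - 1"]) auto
    then show ?thesis unfolding Lam_def by blast
  qed
qed

lemma Lam_eq_lam_set:
  assumes "is_partition la" "is_partition mu" "length la \<le> 2 * s" "length mu \<le> 2 * s"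
  shows "Lam s la mu = lam_set s la mu"
  using Lam_subset_lam_set[OF assms(3,4)] lam_set_subset_Lam[OF assms(1,2)] by (rule antisym)

lemma lam_set_Nil_Nil: "lam_set s [] [] = stair (2 * s)"
  unfolding lam_set_def stair_def part_at_def by auto

lemma transp_lam_set: "transp (lam_set s la mu) = lam_set s mu la"
  unfolding lam_set_def by (auto simp: max.commute add.commute)

lemma young_set_lam_set:
  assumes la: "is_partition la" and mu: "is_partition mu"
  shows "young_set (lam_set s la mu)"
proof (rule young_setI)
  define K where "K = 2 * int s + 1 + 2 * int (psize la + psize mu)"
  have "lam_set s la mu \<subseteq> {1..K} \<times> {1..K}"
  proof
    fix p assume "p \<in> lam_set s la mu"
    then obtain a b where p: "p = (a, b)" "1 \<le> a" "1 \<le> b"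
      "a + b \<le> 2 * int s + 1 + 2 * max (part_at la a) (part_at mu b)"
      unfolding lam_set_def by blast
    moreover have "max (part_at la a) (part_at mu b) \<le> int (psize la + psize mu)"
      using part_at_le_psize[of la a] part_at_le_psize[of mu b] by simp
    ultimately have "a + b \<le> K" unfolding K_def by (smt (verit))
    then show "p \<in> {1..K} \<times> {1..K}" using p by simp
  qed
  then show "finite (lam_set s la mu)" by (rule finite_subset) simp
next
  fix a b assume "(a, b) \<in> lam_set s la mu"
  then show "1 \<le> a \<and> 1 \<le> b" unfolding lam_set_def by simp
next
  fix a b a' b' assume ab: "(a, b) \<in> lam_set s la mu" "1 \<le> a'" "a' \<le> a" "1 \<le> b'" "b' \<le> b"
  then have "part_at la a \<le> part_at la a'" "part_at mu b \<le> part_at mu b'"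
    using part_at_antimono[OF la] part_at_antimono[OF mu] by auto
  then show "(a', b') \<in> lam_set s la mu" using ab unfolding lam_set_def by auto
qed

definition add_box :: "nat list \<Rightarrow> int \<Rightarrow> nat list" where
  "add_box la x =
     (if x \<le> int (length la) then la[nat (x - 1) := la ! nat (x - 1) + 1] else la @ [1])"

lemma part_at_add_box:
  assumes "1 \<le> x" "x \<le> int (length la) + 1"
  shows "part_at (add_box la x) a = part_at la a + (if a = x then 1 else 0)"
proof (cases "x \<le> int (length la)")
  case True
  then show ?thesis using assms unfolding add_box_def part_at_def
    by (auto simp: nth_list_update nat_less_iff)
next
  case False
  then have x: "x = int (length la) + 1" using assms by simp
  show ?thesis using x unfolding add_box_def part_at_def
    by (auto simp: nth_append nat_less_iff)
qed

lemma psize_add_box: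
  assumes "1 \<le> x" "x \<le> int (length la) + 1"
  shows "psize (add_box la x) = psize la + 1"
  using assms unfolding add_box_def psize_def
  by (auto simp: sum_list_update nat_less_iff)

lemma is_partition_snoc_1: "is_partition la \<Longrightarrow> is_partition (la @ [1])"
  unfolding is_partition_iff_nth using partition_nth_pos[of la] by (auto simp: nth_append)

lemma is_partition_increment:
  assumes p: "is_partition la" and i: "i < length la"
    and c: "i = 0 \<or> la ! i < la ! (i - 1)"
  shows "is_partition (la[i := la ! i + 1])"
  unfolding is_partition_iff_nth
proof (intro conjI allI impI)
  fix a b assume ab: "a \<le> b" "b < length (la[i := la ! i + 1])"
  show "la[i := la ! i + 1] ! b \<le> la[i := la ! i + 1] ! a"
  proof (cases "b = i \<and> a \<noteq> i")
    case True
    then have "a \<le> i - 1" using ab by auto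
    then have "la ! (i - 1) \<le> la ! a" using partition_nth_mono[OF p, of a "i - 1"] i by simp
    then show ?thesis using True c ab by (auto simp: nth_list_update)
  next
    case False
    then show ?thesis using ab partition_nth_mono[OF p, of a b]
      by (cases "a = i") (auto simp: nth_list_update)
  qed
next
  fix a assume "a < length (la[i := la ! i + 1])"
  then show "1 \<le> la[i := la ! i + 1] ! a"
    using partition_nth_pos[OF p, of a] by (cases "a = i") (auto simp: nth_list_update)
qed

lemma is_partition_add_box:
  assumes p: "is_partition la" and x: "1 \<le> x" "x \<le> int (length la) + 1"
    and c: "x = 1 \<or> part_at la x < part_at la (x - 1)"
  shows "is_partition (add_box la x)"
proof (cases "x \<le> int (length la)")
  case True
  define i where "i = nat (x - 1)"
  have i: "i < length la" using True x unfolding i_def by simp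
  have "nat (x - 1 - 1) = i - 1" unfolding i_def by simp
  then have "x \<noteq> 1 \<Longrightarrow> part_at la x = int (la ! i) \<and> part_at la (x - 1) = int (la ! (i - 1))"
    using x True unfolding part_at_def i_def by simp
  then have "i = 0 \<or> la ! i < la ! (i - 1)"
    using c unfolding i_def by (cases "x = 1") auto
  then show ?thesis
    using is_partition_increment[OF p i] True unfolding add_box_def i_def by simp
next
  case False
  then show ?thesis using is_partition_snoc_1[OF p] unfolding add_box_def by simp
qed

text \<open>Adding a box to row x of la adds the horizontal domino just beyond the end of
  row x of the closed form; the bound on |la| + |mu| ensures that no leg of mu
  reaches that row.\<close>
lemma lam_set_add_box:
  assumes la: "is_partition la" and mu: "is_partition mu"
    and x: "1 \<le> x" "x \<le> int (length la) + 1" and part: "is_partition (add_box la x)"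
    and sz: "psize la + psize mu + 1 < 2 * s"
  defines "y \<equiv> 2 * int s + 2 - x + 2 * part_at la x"
  shows "lam_set s (add_box la x) mu = lam_set s la mu \<union> {(x, y), (x, y + 1)}"
    and "(x, y) \<notin> lam_set s la mu" and "(x, y + 1) \<notin> lam_set s la mu"
proof -
  define la' where "la' = add_box la x"
  have new_part: "part_at la' a = part_at la a + (if a = x then 1 else 0)" for a
    unfolding la'_def using part_at_add_box[OF x] .
  have "psize la' = psize la + 1" unfolding la'_def using psize_add_box[OF x] .
  then have separated: "a + b \<le> 2 * int s - 1" if "0 < part_at la' a" "0 < part_at mu b" for a b
    using arm_leg_separated[OF part[folded la'_def] mu that] sz by simp
  have row_x: "0 < part_at la' x" using new_part part_at_nonneg[of la x] by simp
  have no_leg: "part_at mu b = 0" if "2 * int s + 1 \<le> x + b" for b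
    using separated[OF row_x, of b] that part_at_nonneg[of mu b] by fastforce
  have y: "1 \<le> y" "x + y = 2 * int s + 2 + 2 * part_at la x"
    using x length_le_psize[OF la] sz part_at_nonneg[of la x] unfolding y_def by simp_all
  show "(x, y) \<notin> lam_set s la mu" "(x, y + 1) \<notin> lam_set s la mu"
    unfolding lam_set_def using no_leg[of y] no_leg[of "y + 1"] y part_at_nonneg[of la x]
    by (auto simp: max_def)
  have "(a, b) \<in> lam_set s la' mu \<longleftrightarrow> (a, b) \<in> lam_set s la mu \<union> {(x, y), (x, y + 1)}" for a b
  proof (cases "a = x")
    case False
    then show ?thesis using new_part[of a] unfolding lam_set_def by auto
  next
    case True
    show ?thesis
    proof (cases "0 < part_at mu b")
      case True
      then have "a + b \<le> 2 * int s - 1" using separated[OF _ True] row_x \<open>a = x\<close> by simp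
      then show ?thesis
        using \<open>a = x\<close> True no_leg[of b] y x(1) part_at_nonneg[of la a] part_at_nonneg[of la' a]
        unfolding lam_set_def by (auto simp: max_def)
    next
      case False
      then have "part_at mu b = 0" using part_at_nonneg[of mu b] by simp
      then have "max (part_at la' x) (part_at mu b) = part_at la x + 1"
        "max (part_at la x) (part_at mu b) = part_at la x"
        using new_part[of x] part_at_nonneg[of la x] by auto
      then show ?thesis using \<open>a = x\<close> y x(1) unfolding lam_set_def by auto
    qed
  qed
  then show "lam_set s (add_box la x) mu = lam_set s la mu \<union> {(x, y), (x, y + 1)}"
    unfolding la'_def by (simp add: set_eq_iff split_paired_all)
qed

lemma partition_remove_box:
  assumes la: "is_partition la" and ne: "la \<noteq> []"
  shows "\<exists>la0. is_partition la0 \<and> length la \<le> length la0 + 1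
     \<and> add_box la0 (int (length la)) = la \<and> psize la0 + 1 = psize la"
proof -
  obtain xs v where la_eq: "la = xs @ [v]" using ne by (metis rev_exhaust)
  have sorted: "sorted (v # rev xs)" and pos: "0 \<notin> set xs" "v \<noteq> 0"
    using la unfolding is_partition_def la_eq by auto
  then have v_le: "\<forall>u\<in>set xs. v \<le> u" by simp
  show ?thesis
  proof (cases "v = 1")
    case True
    have "is_partition xs" using sorted pos unfolding is_partition_def by simp
    moreover have "add_box xs (int (length la)) = la" using True unfolding add_box_def la_eq by simp
    ultimately show ?thesis unfolding la_eq psize_def using True by (intro exI[of _ xs]) simp
  next
    case False
    define la0 where "la0 = xs @ [v - 1]"
    have "sorted ((v - 1) # rev xs)" using sorted v_le by auto
    then have "is_partition la0" using pos False unfolding is_partition_def la0_def by simp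
    moreover have "add_box la0 (int (length la)) = la"
      using pos unfolding add_box_def la0_def la_eq by (simp add: nth_append)
    moreover have "psize la0 + 1 = psize la" using pos unfolding psize_def la0_def la_eq by simp
    moreover have "length la \<le> length la0 + 1" unfolding la0_def la_eq by simp
    ultimately show ?thesis by blast
  qed
qed

text \<open>Growing la box by box: each box adds a domino of weight 0, so relative to
  la = [] the size grows by 2|la| and cweight is unchanged.\<close>
lemma lam_set_size_cweight_arms:
  assumes mu: "is_partition mu"
  shows "is_partition la \<Longrightarrow> psize la + psize mu < 2 * s \<Longrightarrow>
    card (lam_set s la mu) = card (lam_set s [] mu) + 2 * psize la
    \<and> cweight (lam_set s la mu) = cweight (lam_set s [] mu)"
proof (induct "psize la" arbitrary: la)
  case 0
  then have "la = []" using length_le_psize[of la] by simp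
  then show ?case by (simp add: psize_Nil)
next
  case (Suc N)
  then have "la \<noteq> []" unfolding psize_def by auto
  then obtain la0 where "is_partition la0" "length la \<le> length la0 + 1"
    "add_box la0 (int (length la)) = la" "psize la0 + 1 = psize la"
    using partition_remove_box[OF Suc.prems(1)] by blast
  moreover define x where "x = int (length la)"
  ultimately have la0: "is_partition la0" "1 \<le> x" "x \<le> int (length la0) + 1"
    "add_box la0 x = la" "psize la0 + 1 = psize la"
    using \<open>la \<noteq> []\<close> by (auto simp: Suc_le_eq)
  have IH: "card (lam_set s la0 mu) = card (lam_set s [] mu) + 2 * psize la0
      \<and> cweight (lam_set s la0 mu) = cweight (lam_set s [] mu)"
    using Suc.hyps(1)[of la0] la0 Suc by simp
  define y where "y = 2 * int s + 2 - x + 2 * part_at la0 x"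
  have "psize la0 + psize mu + 1 < 2 * s" using la0 Suc.prems by simp
  then have step: "lam_set s la mu = lam_set s la0 mu \<union> {(x, y), (x, y + 1)}"
    "(x, y) \<notin> lam_set s la0 mu" "(x, y + 1) \<notin> lam_set s la0 mu"
    using lam_set_add_box[OF la0(1) mu la0(2,3)] la0(4) Suc.prems(1) unfolding y_def by auto
  have "finite (lam_set s la0 mu)" using young_setD(1)[OF young_set_lam_set[OF la0(1) mu]] .
  with step IH la0(5) show ?case using add_hdomino[of "lam_set s la0 mu" x y] by simp
qed

text \<open>Part (a) of the theorem for the closed form: size s(2s+1) + 2|la| + 2|mu| and
  cweight s, by growing la and (after transposing) mu from the staircase.\<close>
lemma lam_set_size_cweight:
  assumes la: "is_partition la" and mu: "is_partition mu" and sz: "psize la + psize mu < 2 * s"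
  shows "card (lam_set s la mu) = s * (2 * s + 1) + 2 * psize la + 2 * psize mu"
    and "cweight (lam_set s la mu) = int s"
proof -
  have arms: "card (lam_set s la mu) = card (lam_set s [] mu) + 2 * psize la"
    "cweight (lam_set s la mu) = cweight (lam_set s [] mu)"
    using lam_set_size_cweight_arms[OF mu la sz] by auto
  have legs: "card (lam_set s mu []) = card (lam_set s [] []) + 2 * psize mu"
    "cweight (lam_set s mu []) = cweight (lam_set s [] [])"
    using lam_set_size_cweight_arms[OF is_partition_Nil mu] sz by (auto simp: psize_Nil)
  have "lam_set s [] mu = transp (lam_set s mu [])" using transp_lam_set[of s mu "[]"] by simp
  then have swap: "card (lam_set s [] mu) = card (lam_set s mu [])"
    "cweight (lam_set s [] mu) = cweight (lam_set s mu [])"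
    using card_transp cweight_transp by simp_all
  have "2 * card (stair (2 * s)) = 2 * s * (2 * s + 1)" "cweight (stair (2 * s)) = int s"
    using stair_card_cweight[of "2 * s"] by auto
  then show "card (lam_set s la mu) = s * (2 * s + 1) + 2 * psize la + 2 * psize mu"
    and "cweight (lam_set s la mu) = int s"
    using arms legs swap lam_set_Nil_Nil by simp_all
qed

section \<open>Injectivity\<close>

text \<open>If la' has a row beyond the last row of la, the first box of its arm, at the
  end of the staircase row, lies outside the closed form for la: mu cannot reach it.\<close>
lemma lam_set_eq_length_le:
  assumes la: "is_partition la" and mu: "is_partition mu" and sz: "psize la + psize mu < 2 * s"
    and la': "is_partition la'" and sz': "psize la' + psize mu' < 2 * s"
    and eq: "lam_set s la mu = lam_set s la' mu'"
  shows "length la' \<le> length la"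
proof (rule ccontr)
  assume "\<not> length la' \<le> length la"
  define x where "x = int (length la) + 1"
  define y where "y = 2 * int s + 2 - x"
  have arm': "0 < part_at la' x" using part_at_pos_iff[OF la'] \<open>\<not> length la' \<le> length la\<close>
    unfolding x_def by simp
  have no_arm: "part_at la x = 0" unfolding x_def part_at_def by simp
  have "x \<le> int (psize la')"
    using part_at_pos_iff[OF la', of x] arm' length_le_psize[OF la'] by simp
  then have "1 \<le> y" using sz' unfolding y_def by simp
  then have "(x, y) \<in> lam_set s la' mu'"
    using arm' unfolding lam_set_def y_def x_def by (auto simp: max_def)
  then have "(x, y) \<in> lam_set s la mu" using eq by simp
  then have "2 * int s + 2 \<le> 2 * int s + 1 + 2 * max (part_at la x) (part_at mu y)"
    unfolding lam_set_def y_def by simp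
  then have "0 < part_at mu y" using no_arm by (auto simp: max_def split: if_splits)
  then have "y \<le> int (length mu)" using part_at_pos_iff[OF mu] by simp
  then show False
    using length_le_psize[OF la] length_le_psize[OF mu] sz unfolding y_def x_def by simp
qed

text \<open>With equally many rows, the last box of the arm of row x for la lies in the
  closed form for la' only if part x of la' is at least as large.\<close>
lemma lam_set_eq_part_le:
  assumes la: "is_partition la" and sz: "psize la + psize mu < 2 * s"
    and la': "is_partition la'" and mu': "is_partition mu'" and sz': "psize la' + psize mu' < 2 * s"
    and eq: "lam_set s la mu = lam_set s la' mu'" and len: "length la = length la'"
  shows "part_at la x \<le> part_at la' x"
proof (rule ccontr)
  assume "\<not> ?thesis"
  then have less: "part_at la' x < part_at la x" by simp
  then have arm: "0 < part_at la x" using part_at_nonneg[of la' x] by simp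
  then have x: "1 \<le> x" "x \<le> int (length la)" using part_at_pos_iff[OF la] by auto
  then have arm': "0 < part_at la' x" using part_at_pos_iff[OF la'] len by simp
  define y where "y = 2 * int s + 1 + 2 * part_at la x - x"
  have "1 \<le> y" using x length_le_psize[OF la] sz arm unfolding y_def by simp
  then have "(x, y) \<in> lam_set s la mu" using x unfolding lam_set_def y_def by simp
  then have "(x, y) \<in> lam_set s la' mu'" using eq by simp
  then have "part_at la x \<le> part_at mu' y"
    using less unfolding lam_set_def y_def by (auto simp: max_def split: if_splits)
  then have "x + y \<le> int (psize la' + psize mu')"
    using arm_leg_separated[OF la' mu' arm'] arm by simp
  then show False using sz' arm unfolding y_def by simp
qed

lemma lam_set_eq_imp_eq:
  assumes la: "is_partition la" and mu: "is_partition mu" and sz: "psize la + psize mu < 2 * s"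
    and la': "is_partition la'" and mu': "is_partition mu'" and sz': "psize la' + psize mu' < 2 * s"
    and eq: "lam_set s la mu = lam_set s la' mu'"
  shows "la = la'"
proof (rule nth_equalityI)
  show len: "length la = length la'"
    using lam_set_eq_length_le[OF la mu sz la' sz' eq] lam_set_eq_length_le[OF la' mu' sz' la sz eq[symmetric]]
    by simp
  fix i assume "i < length la"
  have "part_at la (int i + 1) = part_at la' (int i + 1)"
    using lam_set_eq_part_le[OF la sz la' mu' sz' eq len] lam_set_eq_part_le[OF la' sz' la mu sz eq[symmetric] len[symmetric]]
    by (simp add: order_antisym)
  then show "la ! i = la' ! i" using \<open>i < length la\<close> len unfolding part_at_def by simp
qed

section \<open>Removable dominoes and 2-cores\<close>

definition hdomino_removable :: "(int \<times> int) set \<Rightarrow> int \<Rightarrow> int \<Rightarrow> bool" where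
  "hdomino_removable D x y \<longleftrightarrow>
     (x, y) \<in> D \<and> (x, y + 1) \<in> D \<and> (x, y + 2) \<notin> D \<and> (x + 1, y) \<notin> D"

definition vdomino_removable :: "(int \<times> int) set \<Rightarrow> int \<Rightarrow> int \<Rightarrow> bool" where
  "vdomino_removable D x y \<longleftrightarrow>
     (x, y) \<in> D \<and> (x + 1, y) \<in> D \<and> (x + 2, y) \<notin> D \<and> (x, y + 1) \<notin> D"

lemma vdomino_removable_transp: "vdomino_removable D x y \<longleftrightarrow> hdomino_removable (transp D) y x"
  unfolding vdomino_removable_def hdomino_removable_def by simp

lemma young_set_remove_hdomino:
  assumes Y: "young_set D" and h: "hdomino_removable D x y"
  shows "young_set (D - {(x, y), (x, y + 1)})"
proof (rule young_setI)
  show "finite (D - {(x, y), (x, y + 1)})" using young_setD(1)[OF Y] by simp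
next
  fix a b assume "(a, b) \<in> D - {(x, y), (x, y + 1)}"
  then show "1 \<le> a \<and> 1 \<le> b" using young_setD(2,3)[OF Y] by blast
next
  fix a b a' b' assume ab: "(a, b) \<in> D - {(x, y), (x, y + 1)}" "1 \<le> a'" "a' \<le> a" "1 \<le> b'" "b' \<le> b"
  then have "(a', b') \<in> D" using young_setD(4)[OF Y] by blast
  moreover have "(a', b') \<notin> {(x, y), (x, y + 1)}"
  proof
    assume "(a', b') \<in> {(x, y), (x, y + 1)}"
    then have a': "a' = x" and b': "y \<le> b'" "b' \<le> y + 1" by auto
    have "1 \<le> y" using young_setD(3)[OF Y, of x y] h unfolding hdomino_removable_def by simp
    show False
    proof (cases "a = x")
      case True
      then have "y + 2 \<le> b" using ab b' by auto
      then have "(x, y + 2) \<in> D" using ab True young_setD(4)[OF Y, of a b x "y + 2"] \<open>1 \<le> y\<close> by simp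
      then show False using h unfolding hdomino_removable_def by simp
    next
      case False
      then have "x + 1 \<le> a" using ab a' by auto
      then have "(x + 1, y) \<in> D" using ab a' b' young_setD(4)[OF Y, of a b "x + 1" y] \<open>1 \<le> y\<close> by simp
      then show False using h unfolding hdomino_removable_def by simp
    qed
  qed
  ultimately show "(a', b') \<in> D - {(x, y), (x, y + 1)}" by simp
qed

lemma young_set_remove_vdomino:
  assumes Y: "young_set D" and v: "vdomino_removable D x y"
  shows "young_set (D - {(x, y), (x + 1, y)})"
proof -
  have "young_set (transp D - {(y, x), (y, x + 1)})"
    using young_set_remove_hdomino[OF young_set_transp[OF Y]] v
    unfolding vdomino_removable_transp by simp
  then have "young_set (transp (transp D - {(y, x), (y, x + 1)}))" by (rule young_set_transp)
  then show ?thesis by (simp add: transp_Diff transp_pair)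
qed

text \<open>In a Young set without removable dominoes, a row of length c \<ge> 1 is followed
  by a row of length c - 1: a box below its end would create a removable vertical
  domino at the bottom of column c, and a missing box below its penultimate box
  would make the last two boxes of the row a removable horizontal domino.\<close>
lemma no_removable_domino_next_row:
  assumes Y: "young_set D"
    and nh: "\<And>x y. \<not> hdomino_removable D x y" and nv: "\<And>x y. \<not> vdomino_removable D x y"
    and x: "1 \<le> x" and row_x: "row D x = {1..c}" and c: "1 \<le> c"
  shows "row D (x + 1) = {1..c - 1}"
proof -
  note dc = young_setD(4)[OF Y]
  have in_row_x: "(x, y) \<in> D \<longleftrightarrow> 1 \<le> y \<and> y \<le> c" for y
    using row_x unfolding row_def by (simp add: set_eq_iff)
  have no_end_below: "(x + 1, c) \<notin> D"
  proof
    assume xc: "(x + 1, c) \<in> D"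
    define n where "n = int (card (row (transp D) c))"
    have "row (transp D) c = {1..n}"
      unfolding n_def by (rule young_set_row_interval[OF young_set_transp[OF Y] c])
    then have col_c: "(a, c) \<in> D \<longleftrightarrow> 1 \<le> a \<and> a \<le> n" for a
      unfolding row_def by (simp add: set_eq_iff)
    have "x + 1 \<le> n" using col_c[of "x + 1"] xc by simp
    moreover have "(n - 1, c + 1) \<notin> D"
    proof
      assume "(n - 1, c + 1) \<in> D"
      then have "(x, c + 1) \<in> D" using dc[of "n - 1" "c + 1" x "c + 1"] x c \<open>x + 1 \<le> n\<close> by simp
      then show False using in_row_x[of "c + 1"] by simp
    qed
    ultimately have "vdomino_removable D (n - 1) c"
      unfolding vdomino_removable_def using col_c[of "n - 1"] col_c[of n] col_c[of "n + 1"] x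
      by (simp add: add.commute)
    then show False using nv by blast
  qed
  have below_penultimate: "(x + 1, c - 1) \<in> D" if "2 \<le> c"
  proof (rule ccontr)
    assume "(x + 1, c - 1) \<notin> D"
    then have "hdomino_removable D x (c - 1)"
      unfolding hdomino_removable_def using in_row_x[of "c - 1"] in_row_x[of c] in_row_x[of "c + 1"] that
      by (simp add: add.commute)
    then show False using nh by blast
  qed
  have "(x + 1, y) \<in> D \<longleftrightarrow> 1 \<le> y \<and> y \<le> c - 1" for y
  proof
    assume xy: "(x + 1, y) \<in> D"
    then have "1 \<le> y" using young_setD(3)[OF Y] by blast
    moreover have "(x, y) \<in> D" using dc[OF xy, of x y] x \<open>1 \<le> y\<close> by simp
    ultimately show "1 \<le> y \<and> y \<le> c - 1"
      using in_row_x[of y] no_end_below xy by (cases "y = c") auto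
  next
    assume "1 \<le> y \<and> y \<le> c - 1"
    then show "(x + 1, y) \<in> D"
      using dc[OF below_penultimate, of "x + 1" y] x by simp
  qed
  then show ?thesis unfolding row_def by (simp add: set_eq_iff)
qed

lemma no_removable_domino_stair:
  assumes Y: "young_set D"
    and nh: "\<And>x y. \<not> hdomino_removable D x y" and nv: "\<And>x y. \<not> vdomino_removable D x y"
  shows "\<exists>m. D = stair m"
proof -
  note dc = young_setD(4)[OF Y]
  define m where "m = card (row D 1)"
  have rows: "row D (int j + 1) = {1..int m - int j}" if "j \<le> m" for j
    using that
  proof (induct j)
    case 0
    show ?case using young_set_row_interval[OF Y, of 1] unfolding m_def by simp
  next
    case (Suc j)
    then have "row D (int j + 1 + 1) = {1..int m - int j - 1}"
      by (intro no_removable_domino_next_row[OF Y nh nv]) auto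
    then show ?case by (simp add: add.commute)
  qed
  have "(a, b) \<in> D \<longleftrightarrow> (a, b) \<in> stair m" for a b
  proof (cases "1 \<le> a \<and> a \<le> int m + 1")
    case True
    then have "nat (a - 1) \<le> m" by linarith
    with True have "row D a = {1..int m + 1 - a}"
      using rows[of "nat (a - 1)"] by (simp add: algebra_simps)
    then have "(a, b) \<in> D \<longleftrightarrow> 1 \<le> b \<and> b \<le> int m + 1 - a"
      unfolding row_def by (simp add: set_eq_iff)
    then show ?thesis using True unfolding stair_def by auto
  next
    case False
    have "(a, b) \<notin> D"
    proof
      assume ab: "(a, b) \<in> D"
      then have "(int m + 1, 1) \<in> D"
        using False dc[OF ab, of "int m + 1" 1] young_setD(2,3)[OF Y ab] by simp
      then show False using rows[of m] unfolding row_def by simp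
    qed
    then show ?thesis using False unfolding stair_def by auto
  qed
  then have "D = stair m" by (simp add: set_eq_iff split_paired_all)
  then show ?thesis ..
qed

section \<open>Surjectivity\<close>

text \<open>Where can a box (x,y) outside the closed form sit if its upper-right neighbour
  (x-1,y+1) belongs to it?  Not in a row beyond length la + 1 (this would force
  mu to increase from column y to y+1), and not in the first column (the
  staircase and the legs of mu fill the first column far enough).\<close>
lemma addable_cell_row:
  assumes la: "is_partition la" and mu: "is_partition mu"
    and sz: "psize la + psize mu + 1 < 2 * s" and x: "1 \<le> x" and y: "1 \<le> y"
    and out: "(x, y) \<notin> lam_set s la mu"
    and up: "2 \<le> x \<Longrightarrow> (x - 1, y + 1) \<in> lam_set s la mu"
  shows "x \<le> int (length la) + 1" and "2 \<le> y"
proof -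
  have out': "2 * int s + 1 + 2 * max (part_at la x) (part_at mu y) < x + y"
    using out x y unfolding lam_set_def by auto
  show row: "x \<le> int (length la) + 1"
  proof (rule ccontr)
    assume "\<not> ?thesis"
    then have "part_at la x = 0" "part_at la (x - 1) = 0" "2 \<le> x"
      using x unfolding part_at_def by auto
    then have "part_at mu y < part_at mu (y + 1)"
      using up out' part_at_nonneg[of mu y] part_at_nonneg[of mu "y + 1"]
      unfolding lam_set_def by (auto simp: max_def)
    moreover have "part_at mu (y + 1) \<le> part_at mu y" using part_at_antimono[OF mu y] by simp
    ultimately show False by simp
  qed
  show "2 \<le> y"
  proof (rule ccontr)
    assume "\<not> ?thesis"
    then have "2 * int s + 1 < x + 1"
      using out' y part_at_nonneg[of la x] by (auto simp: max_def split: if_splits)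
    then show False using row length_le_psize[OF la] sz by simp
  qed
qed

lemma addable_cell_position:
  assumes la: "is_partition la" and mu: "is_partition mu"
    and sz: "psize la + psize mu + 1 < 2 * s" and x: "1 \<le> x" and y: "1 \<le> y"
    and out: "(x, y) \<notin> lam_set s la mu"
    and up: "2 \<le> x \<Longrightarrow> (x - 1, y + 1) \<in> lam_set s la mu"
    and left: "2 \<le> y \<Longrightarrow> (x, y - 1) \<in> lam_set s la mu"
  shows "y = 2 * int s + 2 - x + 2 * part_at la x"
    and "x = 1 \<or> part_at la x < part_at la (x - 1)"
proof -
  note row = addable_cell_row[OF la mu sz x y out up]
  have out': "2 * int s + 1 + 2 * max (part_at la x) (part_at mu y) < x + y"
    using out x y unfolding lam_set_def by auto
  have separated: "a + b \<le> 2 * int s - 2" if "0 < part_at la a" "0 < part_at mu b" for a b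
    using arm_leg_separated[OF la mu that] sz by simp
  have "max (part_at la x) (part_at mu (y - 1)) = part_at la x"
  proof (rule ccontr)
    assume "\<not> ?thesis"
    then have "part_at la x < part_at mu (y - 1)" by (auto simp: max_def split: if_splits)
    then have leg: "0 < part_at mu (y - 1)" using part_at_nonneg[of la x] by simp
    have "x + y \<le> 2 * int s"
    proof (cases "0 < part_at la x")
      case True
      then show ?thesis using separated[OF True leg] by simp
    next
      case False
      then have "x = int (length la) + 1" using row(1) x part_at_pos_iff[OF la, of x] by simp
      moreover have "y - 1 \<le> int (length mu)" using leg part_at_pos_iff[OF mu, of "y - 1"] by simp
      ultimately show ?thesis using length_le_psize[OF la] length_le_psize[OF mu] sz by simp
    qed
    moreover have "2 * int s + 1 < x + y"
      using out' part_at_nonneg[of la x] by (auto simp: max_def split: if_splits)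
    ultimately show False by simp
  qed
  then have xy: "x + y = 2 * int s + 2 + 2 * part_at la x"
    using left[OF row(2)] out' unfolding lam_set_def by (auto simp: max_def split: if_splits)
  then show "y = 2 * int s + 2 - x + 2 * part_at la x" by simp
  show "x = 1 \<or> part_at la x < part_at la (x - 1)"
  proof (rule ccontr)
    assume "\<not> ?thesis"
    then have x2: "2 \<le> x" and le: "part_at la (x - 1) \<le> part_at la x" using x by auto
    have arm: "0 < part_at la (x - 1)" using part_at_pos_iff[OF la, of "x - 1"] x2 row(1) by simp
    have "part_at la x < part_at mu (y + 1)"
      using up[OF x2] xy le unfolding lam_set_def by (auto simp: max_def split: if_splits)
    then have "0 < part_at mu (y + 1)" using part_at_nonneg[of la x] by simp
    then have "x - 1 + (y + 1) \<le> 2 * int s - 2" using separated[OF arm, of "y + 1"] by blast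
    then show False using xy part_at_nonneg[of la x] by simp
  qed
qed

lemma lam_set_add_hdomino:
  assumes la: "is_partition la" and mu: "is_partition mu"
    and sz: "psize la + psize mu + 1 < 2 * s"
    and Y: "young_set (lam_set s la mu \<union> {(x, y), (x, y + 1)})"
    and out: "(x, y) \<notin> lam_set s la mu"
  shows "\<exists>la'. is_partition la' \<and> psize la' = psize la + 1
    \<and> lam_set s la' mu = lam_set s la mu \<union> {(x, y), (x, y + 1)}"
proof -
  note dc = young_setD(4)[OF Y]
  have x: "1 \<le> x" and y: "1 \<le> y" using young_setD(2,3)[OF Y, of x y] by auto
  have "(x - 1, y + 1) \<in> lam_set s la mu" if "2 \<le> x"
    using dc[of x "y + 1" "x - 1" "y + 1"] that y by auto
  moreover have "(x, y - 1) \<in> lam_set s la mu" if "2 \<le> y"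
    using dc[of x y x "y - 1"] that x by auto
  ultimately have row: "x \<le> int (length la) + 1"
    and pos: "y = 2 * int s + 2 - x + 2 * part_at la x" "x = 1 \<or> part_at la x < part_at la (x - 1)"
    using addable_cell_row[OF la mu sz x y out] addable_cell_position[OF la mu sz x y out]
    by blast+
  have part: "is_partition (add_box la x)" by (rule is_partition_add_box[OF la x row pos(2)])
  then show ?thesis
    using lam_set_add_box(1)[OF la mu x row part sz] psize_add_box[OF x row] pos(1) by metis
qed

lemma lam_set_add_domino:
  assumes la: "is_partition la" and mu: "is_partition mu"
    and sz: "psize la + psize mu + 1 < 2 * s"
    and Y: "young_set D" and D: "D = lam_set s la mu \<union> P" and nP: "lam_set s la mu \<inter> P = {}"
    and P: "P = {(x, y), (x, y + 1)} \<or> P = {(x, y), (x + 1, y)}"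
  shows "\<exists>la' mu'. is_partition la' \<and> is_partition mu'
    \<and> psize la' + psize mu' = psize la + psize mu + 1 \<and> D = lam_set s la' mu'"
  using P
proof
  assume "P = {(x, y), (x, y + 1)}"
  then obtain la' where "is_partition la'" "psize la' = psize la + 1" "D = lam_set s la' mu"
    using lam_set_add_hdomino[OF la mu sz, of x y] Y D nP by auto
  then show ?thesis using mu by (intro exI[of _ la'] exI[of _ mu]) simp
next
  assume P: "P = {(x, y), (x + 1, y)}"
  have "transp D = lam_set s mu la \<union> {(y, x), (y, x + 1)}"
    unfolding D P transp_Un transp_lam_set transp_pair ..
  moreover have "(y, x) \<notin> lam_set s mu la"
    using nP P transp_lam_set[of s la mu] transp_mem[of y x "lam_set s la mu"] by auto
  ultimately obtain mu' where "is_partition mu'" "psize mu' = psize mu + 1"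
    "transp D = lam_set s mu' la"
    using lam_set_add_hdomino[OF mu la, of s y x] young_set_transp[OF Y] sz by auto
  moreover from this have "D = lam_set s la mu'"
    by (metis transp_lam_set transp_transp)
  ultimately show ?thesis using la by (intro exI[of _ la] exI[of _ mu']) simp
qed

lemma remove_domino:
  assumes Y: "young_set D"
    and P: "P = {(x, y), (x, y + 1)} \<and> hdomino_removable D x y
          \<or> P = {(x, y), (x + 1, y)} \<and> vdomino_removable D x y"
  shows "young_set (D - P)" "D = (D - P) \<union> P" "(D - P) \<inter> P = {}"
    and "card D = card (D - P) + 2" "cweight D = cweight (D - P)"
proof -
  show "young_set (D - P)"
    using P young_set_remove_hdomino[OF Y] young_set_remove_vdomino[OF Y] by auto
  have "P \<subseteq> D" using P unfolding hdomino_removable_def vdomino_removable_def by auto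
  then show DP: "D = (D - P) \<union> P" by blast
  show disj: "(D - P) \<inter> P = {}" by blast
  have fin: "finite (D - P)" "finite P" using P young_setD(1)[OF Y] by auto
  have "card P = 2" "cweight P = 0"
    using P cweight_hdomino cweight_vdomino by auto
  then show "card D = card (D - P) + 2" "cweight D = cweight (D - P)"
    using DP card_Un_disjoint[OF fin disj] cweight_Un[OF fin disj] by simp_all
qed

lemma stair_cweight_eq:
  assumes "1 \<le> s" "cweight (stair m) = int s"
  shows "m = 2 * s"
  using assms stair_card_cweight[of m] by (auto split: if_splits)

text \<open>Every Young set of cweight s with at most s(2s+1) + 2k boxes is a closed form
  with |la| + |mu| \<le> k: strip removable dominoes down to the staircase Lambda^s and
  add them back one at a time.\<close>
lemma young_set_is_lam_set:
  assumes s: "1 \<le> s" and k: "k < 2 * s"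
  shows "young_set D \<Longrightarrow> cweight D = int s \<Longrightarrow> card D \<le> s * (2 * s + 1) + 2 * k \<Longrightarrow>
    \<exists>la mu. is_partition la \<and> is_partition mu \<and> psize la + psize mu \<le> k \<and> D = lam_set s la mu"
proof (induct "card D" arbitrary: D rule: less_induct)
  case less
  note Y = less.prems(1)
  show ?case
  proof (cases "\<exists>x y. hdomino_removable D x y \<or> vdomino_removable D x y")
    case False
    then obtain m where "D = stair m" using no_removable_domino_stair[OF Y] by blast
    with less.prems(2) have "D = lam_set s [] []"
      using stair_cweight_eq[OF s] lam_set_Nil_Nil by simp
    then show ?thesis using is_partition_Nil by (intro exI[of _ "[]"]) (simp add: psize_Nil)
  next
    case True
    then obtain x y P where P: "P = {(x, y), (x, y + 1)} \<and> hdomino_removable D x y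
          \<or> P = {(x, y), (x + 1, y)} \<and> vdomino_removable D x y"
      by blast
    note D' = remove_domino[OF Y P]
    have shape: "P = {(x, y), (x, y + 1)} \<or> P = {(x, y), (x + 1, y)}" using P by blast
    obtain la mu where lm: "is_partition la" "is_partition mu" "psize la + psize mu \<le> k"
      "D - P = lam_set s la mu"
      using less.hyps[of "D - P"] D' less.prems(2,3) by auto
    have "card (D - P) = s * (2 * s + 1) + 2 * psize la + 2 * psize mu"
      using lam_set_size_cweight(1)[OF lm(1,2)] lm(3,4) k by simp
    then have sz: "psize la + psize mu + 1 \<le> k" using D'(4) less.prems(3) by simp
    have "psize la + psize mu + 1 < 2 * s" using sz k by simp
    moreover have "D = lam_set s la mu \<union> P" "lam_set s la mu \<inter> P = {}"
      using D'(2,3) lm(4) by simp_all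
    ultimately obtain la' mu' where "is_partition la'" "is_partition mu'"
        "psize la' + psize mu' = psize la + psize mu + 1" "D = lam_set s la' mu'"
      using lam_set_add_domino[OF lm(1,2) _ Y _ _ shape] by blast
    then show ?thesis using sz by (intro exI[of _ la'] exI[of _ mu']) simp
  qed
qed

lemma diagram_image_partitions:
  "diagram ` {nu. is_partition nu \<and> Q (diagram nu)} = {D. young_set D \<and> Q D}"
  using young_set_diagram young_set_is_diagram by blast

lemma Lam_small:
  assumes la: "is_partition la" and mu: "is_partition mu" and sz: "psize la + psize mu < 2 * s"
  shows "Lam s la mu = lam_set s la mu" and "young_set (Lam s la mu)"
    and "card (Lam s la mu) = s * (2 * s + 1) + 2 * psize la + 2 * psize mu"
    and "cweight (Lam s la mu) = int s"
proof -
  show eq: "Lam s la mu = lam_set s la mu"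
    using Lam_eq_lam_set[OF la mu] length_le_psize[OF la] length_le_psize[OF mu] sz by simp
  show "young_set (Lam s la mu)" unfolding eq by (rule young_set_lam_set[OF la mu])
  show "card (Lam s la mu) = s * (2 * s + 1) + 2 * psize la + 2 * psize mu"
    and "cweight (Lam s la mu) = int s"
    unfolding eq using lam_set_size_cweight[OF la mu sz] by simp_all
qed

lemma Lam_inj_on:
  assumes k: "k < 2 * s"
  shows "inj_on (\<lambda>(la, mu). Lam s la mu)
    {(la, mu). is_partition la \<and> is_partition mu \<and> psize la + psize mu \<le> k}"
proof (rule inj_onI)
  fix p q
  assume "p \<in> {(la, mu). is_partition la \<and> is_partition mu \<and> psize la + psize mu \<le> k}"
    and "q \<in> {(la, mu). is_partition la \<and> is_partition mu \<and> psize la + psize mu \<le> k}"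
    and Lam_eq: "(\<lambda>(la, mu). Lam s la mu) p = (\<lambda>(la, mu). Lam s la mu) q"
  then obtain la mu la' mu' where pq: "p = (la, mu)" "q = (la', mu')"
    and la: "is_partition la" and mu: "is_partition mu" and "psize la + psize mu \<le> k"
    and la': "is_partition la'" and mu': "is_partition mu'" and "psize la' + psize mu' \<le> k"
    by auto
  with k have sz: "psize la + psize mu < 2 * s" "psize la' + psize mu' < 2 * s" by simp_all
  have eq: "lam_set s la mu = lam_set s la' mu'"
    using Lam_eq Lam_small(1)[OF la mu sz(1)] Lam_small(1)[OF la' mu' sz(2)] pq by simp
  have "la = la'" by (rule lam_set_eq_imp_eq[OF la mu sz(1) la' mu' sz(2) eq])
  moreover have "mu = mu'"
  proof (rule lam_set_eq_imp_eq[OF mu la _ mu' la'])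
    show "lam_set s mu la = lam_set s mu' la'" by (metis eq transp_lam_set)
  qed (use sz in simp_all)
  ultimately show "p = q" using pq by simp
qed

lemma Lam_image:
  assumes s: "1 \<le> s" and k: "k < 2 * s"
  shows "(\<lambda>(la, mu). Lam s la mu) `
      {(la, mu). is_partition la \<and> is_partition mu \<and> psize la + psize mu \<le> k}
    = {D. young_set D \<and> cweight D = int s \<and> card D \<le> s * (2 * s + 1) + 2 * k}"
    (is "?Lam ` ?V = ?Y")
proof
  show "?Lam ` ?V \<subseteq> ?Y"
  proof
    fix D assume "D \<in> ?Lam ` ?V"
    then obtain la mu where "is_partition la" "is_partition mu" "psize la + psize mu \<le> k"
      and "D = Lam s la mu" by auto
    moreover from this k have "psize la + psize mu < 2 * s" by simp
    ultimately show "D \<in> ?Y" using Lam_small(2-4) by simp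
  qed
  show "?Y \<subseteq> ?Lam ` ?V"
  proof
    fix D assume "D \<in> ?Y"
    then obtain la mu where lm: "is_partition la" "is_partition mu" "psize la + psize mu \<le> k"
      and "D = lam_set s la mu"
      using young_set_is_lam_set[OF s k] by blast
    moreover have "Lam s la mu = lam_set s la mu" using Lam_small(1)[OF lm(1,2)] lm(3) k by simp
    ultimately show "D \<in> ?Lam ` ?V" by (intro image_eqI[of _ _ "(la, mu)"]) simp_all
  qed
qed

theorem lemma4p1:
  fixes s k :: nat
  assumes "s \<ge> 1" and "2 * s > k"
  shows "(\<forall>la mu. is_partition la \<and> is_partition mu \<and> psize la + psize mu \<le> k \<longrightarrow>
            (\<exists>nu. is_partition nu \<and> Lam s la mu = diagram nu)
            \<and> card (Lam s la mu) = s * (2 * s + 1) + 2 * psize la + 2 * psize mu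
            \<and> cweight (Lam s la mu) = int s)
       \<and> bij_betw (\<lambda>(la, mu). Lam s la mu)
           {(la, mu). is_partition la \<and> is_partition mu \<and> psize la + psize mu \<le> k}
           (diagram ` {nu. is_partition nu \<and> cweight (diagram nu) = int s
                          \<and> psize nu \<le> s * (2 * s + 1) + 2 * k})"
    (is "?part_a \<and> bij_betw ?Lam ?V ?T")
proof
  show ?part_a
  proof (intro allI impI)
    fix la mu assume "is_partition la \<and> is_partition mu \<and> psize la + psize mu \<le> k"
    then have la: "is_partition la" and mu: "is_partition mu"
      and sz: "psize la + psize mu < 2 * s" using assms(2) by auto
    show "(\<exists>nu. is_partition nu \<and> Lam s la mu = diagram nu)
        \<and> card (Lam s la mu) = s * (2 * s + 1) + 2 * psize la + 2 * psize mu
        \<and> cweight (Lam s la mu) = int s"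
      using young_set_is_diagram[OF Lam_small(2)[OF la mu sz]] Lam_small(3,4)[OF la mu sz] by simp
  qed
  have "?T = {D. young_set D \<and> cweight D = int s \<and> card D \<le> s * (2 * s + 1) + 2 * k}"
    using diagram_image_partitions[of "\<lambda>D. cweight D = int s \<and> card D \<le> s * (2 * s + 1) + 2 * k"]
    by (simp add: card_diagram)
  then show "bij_betw ?Lam ?V ?T"
    unfolding bij_betw_def using Lam_inj_on[OF assms(2)] Lam_image[OF assms] by simp
qed

end
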